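(* Let $M\subset\mathbb{R}^{2d}$ satisfy the standing assumptions below and let $T$ be its outer symplectic billiard map. For every integer $k\ge1$ there exists a constant $\rho=\rho(k,M)>0$ such that there are no $k$-periodic orbits of $T$ outside the ball of radius $\rho$ centered at the origin; that is, every point $z$ in the exterior of $M$ with $T^k(z)=z$ satisfies $|z|\le\rho$.
   Context: Equip $\mathbb{R}^{2d}$ with the standard inner product, Euclidean norm $|\cdot|$, complex structure $J$ and symplectic form $\omega(u,v)=\langle Ju,v\rangle$. Standing assumptions: $M\subset\mathbb{R}^{2d}$ is a smooth closed hypersurface bounding a strictly convex domain containing the origin in its interior, and $M$ is a level set of a smooth function with positive definite Hessian. For $q\in M$ the Reeb vector $R(q)$ is the unique vector with $\omega(v,R(q))=0$ for all $v\in T_qM$ and $\omega(q,R(q))=1$. For $x$ in the exterior of $M$ there is a unique $m_-(x)\in M$ with $m_-(x)-x=\lambda R(m_-(x))$ for some $\lambda>0$; the outer symplectic billiard map is $T(x)=2m_-(x)-x$. *)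

theory Defs
  imports "HOL-Analysis.Analysis"
begin

text \<open>We model R^(2d) as (real^'d) \<times> (real^'d), i.e. points (x,y) with z = x + i y.
  The inner product on the product type is the standard one.\<close>

type_synonym 'd R2d = "(real^'d) \<times> (real^'d)"

definition cplxJ :: "'d::finite R2d \<Rightarrow> 'd R2d" where
  "cplxJ u = (- snd u, fst u)"

definition symp :: "'d::finite R2d \<Rightarrow> 'd R2d \<Rightarrow> real" where
  "symp u v = inner (cplxJ u) v"

fun hdiff :: "('a::real_normed_vector \<Rightarrow> real) \<Rightarrow> 'a list \<Rightarrow> 'a \<Rightarrow> real" where
  "hdiff F [] = F"
| "hdiff F (v # vs) = (\<lambda>x. frechet_derivative (hdiff F vs) (at x) v)"

definition smooth_fun :: "('a::real_normed_vector \<Rightarrow> real) \<Rightarrow> bool" where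
  "smooth_fun F \<longleftrightarrow> (\<forall>vs x. hdiff F vs differentiable (at x))"

definition hessian_pos_def :: "('a::real_normed_vector \<Rightarrow> real) \<Rightarrow> bool" where
  "hessian_pos_def F \<longleftrightarrow> (\<forall>x u. u \<noteq> 0 \<longrightarrow> hdiff F [u, u] x > 0)"

definition tangent_space :: "('a::real_normed_vector \<Rightarrow> real) \<Rightarrow> 'a \<Rightarrow> 'a set" where
  "tangent_space F q = {v. frechet_derivative F (at q) v = 0}"

definition reeb :: "('d::finite R2d \<Rightarrow> real) \<Rightarrow> 'd R2d \<Rightarrow> 'd R2d" where
  "reeb F q = (THE r. (\<forall>v\<in>tangent_space F q. symp v r = 0) \<and> symp q r = 1)"

definition m_minus :: "('d::finite R2d \<Rightarrow> real) \<Rightarrow> 'd R2d set \<Rightarrow> 'd R2d \<Rightarrow> 'd R2d" where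
  "m_minus F M x = (THE m. m \<in> M \<and> (\<exists>t>0. m - x = t *\<^sub>R reeb F m))"

definition outer_billiard :: "('d::finite R2d \<Rightarrow> real) \<Rightarrow> 'd R2d set \<Rightarrow> 'd R2d \<Rightarrow> 'd R2d" where
  "outer_billiard F M x = 2 *\<^sub>R m_minus F M x - x"

end

theory Submission
  imports Defs
begin

text \<open>Positivity of the Hessian makes \<open>K = {F \<le> c}\<close> a compact, strictly convex body with \<open>0\<close> in its
  interior. For \<open>x\<close> outside \<open>K\<close>, the point \<open>m = m\<^sub>-(x)\<close> is the unique point of \<open>K\<close> at which the
  linear functional \<open>\<omega>(x - m, \<cdot>) = \<langle>J(x - m), \<cdot>\<rangle>\<close> attains its maximum over \<open>K\<close>; it exists by
  Brouwer's fixed point theorem applied to \<open>y \<mapsto> argmax\<^sub>K \<langle>J(x - y), \<cdot>\<rangle>\<close>, and \<open>T(x) = 2m - x\<close>.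

  Along a \<open>k\<close>-periodic orbit \<open>x\<^sub>0 = z\<close>, \<open>x\<^sub>j\<^sub>+\<^sub>1 = 2m\<^sub>j - x\<^sub>j\<close> one has \<open>x\<^sub>j = (-1)\<^sup>j (z - 2A\<^sub>j)\<close>
  with \<open>A\<^sub>j = \<Sum>i<j. (-1)\<^sup>i m\<^sub>i\<close>, and periodicity forces \<open>\<omega>(z, A\<^sub>k) = 0\<close>. If \<open>K\<close> contains the
  ball of radius \<open>r\<close> and lies in the ball of radius \<open>B\<close> about \<open>0\<close>, testing the support property
  against the small ball gives \<open>r |x\<^sub>j - m\<^sub>j| \<le> \<omega>(x\<^sub>j, m\<^sub>j)\<close>. Summing over one period, the terms
  linear in \<open>z\<close> add up to \<open>\<omega>(z, A\<^sub>k) = 0\<close> and the rest is at most \<open>2k\<^sup>2B\<^sup>2\<close>, so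
  \<open>r (|z| - B) \<le> 2k\<^sup>2B\<^sup>2\<close>.\<close>

lemma inner_cplxJ_cplxJ [simp]: "cplxJ u \<bullet> cplxJ v = u \<bullet> v"
  by (simp add: cplxJ_def inner_prod_def)

lemma inner_cplxJ_left: "cplxJ u \<bullet> v = - (u \<bullet> cplxJ v)"
  by (simp add: cplxJ_def inner_prod_def inner_commute)

lemma inner_cplxJ_self [simp]: "cplxJ u \<bullet> u = 0"
  by (simp add: cplxJ_def inner_prod_def inner_commute)

lemma cplxJ_cplxJ [simp]: "cplxJ (cplxJ u) = - u"
  by (cases u) (simp add: cplxJ_def)

lemma cplxJ_eq_iff: "cplxJ u = cplxJ v \<longleftrightarrow> u = v"
  by (metis cplxJ_cplxJ minus_equation_iff)

lemma linear_cplxJ: "linear cplxJ"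
  by (rule linearI) (simp_all add: cplxJ_def)

lemmas cplxJ_diff = linear_diff[OF linear_cplxJ]
  and cplxJ_scaleR [simp] = linear_scale[OF linear_cplxJ]
  and cplxJ_minus [simp] = linear_neg[OF linear_cplxJ]

lemma norm_cplxJ [simp]: "norm (cplxJ u) = norm u"
  by (simp add: norm_eq_sqrt_inner)

lemma cplxJ_eq_0_iff [simp]: "cplxJ u = 0 \<longleftrightarrow> u = 0"
  by (metis norm_cplxJ norm_eq_zero)

lemma continuous_on_cplxJ: "continuous_on S cplxJ"
  using linear_cplxJ linear_continuous_on linear_linear by blast

lemma DIM_R2d: "2 \<le> DIM('d::finite R2d)"
  using zero_less_card_finite[where 'a='d] by (simp del: zero_less_card_finite)

lemma orthogonal_complement_imp_multiple:
  fixes G p :: "'a::real_inner"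
  assumes "\<And>v. G \<bullet> v = 0 \<Longrightarrow> p \<bullet> v = 0"
  shows "p = ((p \<bullet> G) / (G \<bullet> G)) *\<^sub>R G"
proof -
  define v where "v = p - ((p \<bullet> G) / (G \<bullet> G)) *\<^sub>R G"
  have "G \<bullet> v = 0"
    by (cases "G = 0") (simp_all add: v_def inner_diff_right inner_commute)
  then have "v \<bullet> v = 0"
    using assms[of v] by (simp add: v_def inner_diff_left inner_commute)
  then show ?thesis
    by (simp add: v_def)
qed

lemma halfspace_dual_imp_nonneg_multiple:
  fixes G w :: "'a::real_inner"
  assumes "G \<noteq> 0" and dual: "\<And>v. G \<bullet> v < 0 \<Longrightarrow> w \<bullet> v \<le> 0"
  shows "\<exists>s\<ge>0. w = s *\<^sub>R G"
proof -
  have GG: "G \<bullet> G > 0"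
    using assms(1) by simp
  have "w \<bullet> v = 0" if "G \<bullet> v = 0" for v
  proof (rule ccontr)
    assume "w \<bullet> v \<noteq> 0"
    define t where "t = (w \<bullet> G + 1) / (w \<bullet> v)"
    have "w \<bullet> (t *\<^sub>R v - G) \<le> 0"
      using dual[of "t *\<^sub>R v - G"] GG that by (simp add: inner_diff_right)
    then show False
      using \<open>w \<bullet> v \<noteq> 0\<close> by (simp add: t_def inner_diff_right inner_commute)
  qed
  then have w: "w = ((w \<bullet> G) / (G \<bullet> G)) *\<^sub>R G"
    by (rule orthogonal_complement_imp_multiple)
  have "w \<bullet> G \<ge> 0"
    using dual[of "- G"] GG by (simp add: inner_commute)
  with w GG show ?thesis
    by (intro exI[of _ "(w \<bullet> G) / (G \<bullet> G)"]) simp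
qed

section \<open>Support points\<close>

definition support_point :: "'a::real_inner set \<Rightarrow> 'a \<Rightarrow> 'a \<Rightarrow> bool" where
  "support_point S w z \<longleftrightarrow> z \<in> S \<and> (\<forall>y\<in>S. w \<bullet> y \<le> w \<bullet> z)"

lemma support_point_notin_interior:
  fixes S :: "'a::real_inner set"
  assumes "w \<noteq> 0" and "support_point S w z"
  shows "z \<notin> interior S"
proof
  assume "z \<in> interior S"
  then obtain e where "e > 0" and ball: "ball z e \<subseteq> S"
    using mem_interior by blast
  define y where "y = z + (e / 2 / norm w) *\<^sub>R w"
  have "y \<in> S"
    using ball \<open>e > 0\<close> assms(1) by (auto simp: y_def dist_norm)
  moreover have "w \<bullet> y = w \<bullet> z + e / 2 * norm w"
    using assms(1) by (simp add: y_def inner_add_right dot_square_norm power2_eq_square)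
  moreover have "w \<bullet> y \<le> w \<bullet> z"
    using \<open>y \<in> S\<close> assms(2) unfolding support_point_def by blast
  moreover have "0 < e * norm w"
    using assms(1) \<open>e > 0\<close> by simp
  ultimately show False
    by simp
qed

lemma support_point_exists:
  fixes S :: "'a::real_inner set"
  assumes "compact S" and "S \<noteq> {}"
  shows "\<exists>z. support_point S w z"
proof -
  have "continuous_on S (\<lambda>y. w \<bullet> y)"
    by (intro continuous_intros)
  then show ?thesis
    using continuous_attains_sup[OF assms] by (auto simp: support_point_def)
qed

lemma continuous_on_unique_support_point:
  fixes S :: "'a::euclidean_space set" and \<phi> :: "'a \<Rightarrow> 'a"
  assumes "compact S" and "continuous_on UNIV \<phi>"
    and unique: "\<And>y. y \<in> S \<Longrightarrow> \<exists>!z. support_point S (\<phi> y) z"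
  shows "continuous_on S (\<lambda>y. THE z. support_point S (\<phi> y) z)"
proof -
  define h where "h y = (THE z. support_point S (\<phi> y) z)" for y
  have h: "support_point S (\<phi> y) z \<longleftrightarrow> z = h y" if "y \<in> S" for y z
    using unique[OF that] theI'[OF unique[OF that]] unfolding h_def by blast
  have graph: "(\<lambda>y. (y, h y)) ` S =
      (S \<times> S) \<inter> (\<Inter>y'\<in>S. {p. \<phi> (fst p) \<bullet> y' \<le> \<phi> (fst p) \<bullet> snd p})"
  proof (intro equalityI subsetI)
    fix p
    assume "p \<in> (\<lambda>y. (y, h y)) ` S"
    then obtain y where "y \<in> S" "p = (y, h y)"
      by blast
    then show "p \<in> (S \<times> S) \<inter> (\<Inter>y'\<in>S. {p. \<phi> (fst p) \<bullet> y' \<le> \<phi> (fst p) \<bullet> snd p})"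
      using h[of y "h y"] by (auto simp: support_point_def)
  next
    fix p
    assume "p \<in> (S \<times> S) \<inter> (\<Inter>y'\<in>S. {p. \<phi> (fst p) \<bullet> y' \<le> \<phi> (fst p) \<bullet> snd p})"
    then have "fst p \<in> S" and "support_point S (\<phi> (fst p)) (snd p)"
      by (auto simp: support_point_def)
    then have "snd p = h (fst p)"
      using h by blast
    then show "p \<in> (\<lambda>y. (y, h y)) ` S"
      using \<open>fst p \<in> S\<close> by (auto intro!: image_eqI[where x = "fst p"] simp: prod_eq_iff)
  qed
  have "continuous_on UNIV (\<lambda>p. \<phi> (fst p))"
    by (rule continuous_on_compose2[OF assms(2)]) (auto intro: continuous_intros)
  then have closed_halfspaces: "closed {p. \<phi> (fst p) \<bullet> y' \<le> \<phi> (fst p) \<bullet> snd p}" for y'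
    by (intro closed_Collect_le continuous_intros)
  have "closed ((\<lambda>y. (y, h y)) ` S)"
    unfolding graph using \<open>compact S\<close>
    by (intro closed_Int closed_Times closed_INT compact_imp_closed ballI closed_halfspaces)
  moreover have "h \<in> S \<rightarrow> S"
    using h unfolding support_point_def by blast
  ultimately show ?thesis
    unfolding h_def[abs_def] by (rule continuous_from_closed_graph[OF \<open>compact S\<close>, rotated])
qed

section \<open>Convexity from a positive Hessian\<close>

definition grad :: "('a::euclidean_space \<Rightarrow> real) \<Rightarrow> 'a \<Rightarrow> 'a" where
  "grad F x = adjoint (frechet_derivative F (at x)) 1"

lemma has_real_derivative_along_line:
  fixes G :: "'a::real_normed_vector \<Rightarrow> real"
  assumes "G differentiable (at (x + t *\<^sub>R u))"
  shows "((\<lambda>s. G (x + s *\<^sub>R u)) has_real_derivative frechet_derivative G (at (x + t *\<^sub>R u)) u) (at t)"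
proof -
  let ?G' = "frechet_derivative G (at (x + t *\<^sub>R u))"
  have "((\<lambda>s. x + s *\<^sub>R u) has_derivative (\<lambda>h. h *\<^sub>R u)) (at t)"
    by (auto intro!: derivative_eq_intros)
  from has_derivative_compose[OF this assms[unfolded frechet_derivative_works]]
  have "((\<lambda>s. G (x + s *\<^sub>R u)) has_derivative (\<lambda>h. ?G' (h *\<^sub>R u))) (at t)" .
  moreover have "(\<lambda>h. ?G' (h *\<^sub>R u)) = (*) (?G' u)"
    using linear_frechet_derivative[OF assms] by (simp add: linear_scale fun_eq_iff mult.commute)
  ultimately show ?thesis
    by (simp only: has_field_derivative_def)
qed

locale positive_hessian =
  fixes F :: "'a::euclidean_space \<Rightarrow> real"
  assumes smooth: "smooth_fun F" and hessian: "hessian_pos_def F"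
begin

lemma differentiable_hdiff: "hdiff F vs differentiable (at x)"
  using smooth unfolding smooth_fun_def by blast

lemma frechet_derivative_eq_grad: "frechet_derivative F (at x) v = grad F x \<bullet> v"
  using differentiable_hdiff[of "[]"]
  by (simp add: grad_def adjoint_works linear_frechet_derivative inner_commute)

lemma has_derivative_grad: "(F has_derivative (\<lambda>v. grad F x \<bullet> v)) (at x)"
  using differentiable_hdiff[of "[]" x]
  by (simp add: frechet_derivative_works frechet_derivative_eq_grad[abs_def])

lemma continuous_on_F: "continuous_on S F"
  using has_derivative_grad has_derivative_continuous continuous_at_imp_continuous_on by blast

lemma gradient_inequality_strict:
  assumes "y \<noteq> x"
  shows "F x + grad F x \<bullet> (y - x) < F y"
proof -
  define u where "u = y - x"
  define \<psi> where "\<psi> t = hdiff F [u] (x + t *\<^sub>R u)" for t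
  have \<phi>': "((\<lambda>t. F (x + t *\<^sub>R u)) has_real_derivative \<psi> t) (at t)" for t
    using has_real_derivative_along_line[OF differentiable_hdiff[of "[]"]] by (simp add: \<psi>_def)
  have \<psi>': "(\<psi> has_real_derivative hdiff F [u, u] (x + t *\<^sub>R u)) (at t)" for t
    unfolding \<psi>_def hdiff.simps(2)[of F u "[u]"] by (rule has_real_derivative_along_line[OF differentiable_hdiff])
  have "hdiff F [u, u] z > 0" for z
    using hessian assms unfolding hessian_pos_def_def u_def by simp
  with \<psi>' have \<psi>_mono: "\<psi> 0 < \<psi> t" if "0 < t" for t
    using DERIV_pos_imp_increasing[OF that, of \<psi>] by blast
  obtain t where "0 < t" "F (x + 1 *\<^sub>R u) - F (x + 0 *\<^sub>R u) = (1 - 0) * \<psi> t"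
    using MVT2[of 0 1 "\<lambda>t. F (x + t *\<^sub>R u)" \<psi>] \<phi>' by auto
  with \<psi>_mono[of t] show ?thesis
    by (simp add: \<psi>_def u_def frechet_derivative_eq_grad)
qed

lemma gradient_inequality: "F x + grad F x \<bullet> (y - x) \<le> F y"
  using gradient_inequality_strict[of y x] by (cases "y = x") auto

lemma not_bdd_above_F: "\<not> bdd_above (range F)"
proof -
  obtain p where G: "grad F p \<noteq> 0"
  proof (rule ccontr)
    assume "\<not> thesis"
    then have grad0: "grad F p = 0" for p
      using that by blast
    obtain u :: 'a where "u \<noteq> 0"
      using nonzero_Basis nonempty_Basis by blast
    then show False
      using gradient_inequality_strict[of u 0] gradient_inequality_strict[of 0 u] grad0 by auto
  qed
  define G where "G = grad F p"
  have GG: "G \<bullet> G > 0"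
    using G by (simp add: G_def)
  have unbounded: "\<exists>q. b < F q" for b
  proof
    define t where "t = \<bar>b - F p\<bar> / (G \<bullet> G) + 1"
    have "t > 0"
      by (simp add: t_def GG add_nonneg_pos)
    then have "F p + t * (G \<bullet> G) < F (p + t *\<^sub>R G)"
      using gradient_inequality_strict[of "p + t *\<^sub>R G" p] G by (simp add: G_def)
    moreover have "t * (G \<bullet> G) = \<bar>b - F p\<bar> + G \<bullet> G"
      using GG by (simp add: t_def field_simps)
    ultimately show "b < F (p + t *\<^sub>R G)"
      using GG by linarith
  qed
  show ?thesis
  proof
    assume "bdd_above (range F)"
    then obtain b where "\<And>q. F q \<le> b"
      by (auto simp: bdd_above_def)
    then show False
      using unbounded[of b] by (meson not_le)
  qed
qed

lemma convex_sublevel: "convex {y. F y \<le> c}"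
proof -
  have supporting_halfspaces:
    "(\<Inter>x. {y. grad F x \<bullet> y \<le> c - F x + grad F x \<bullet> x}) = {y. F y \<le> c}"
  proof (intro equalityI subsetI)
    fix y
    assume "y \<in> (\<Inter>x. {y. grad F x \<bullet> y \<le> c - F x + grad F x \<bullet> x})"
    then have "grad F y \<bullet> y \<le> c - F y + grad F y \<bullet> y"
      by blast
    then show "y \<in> {y. F y \<le> c}"
      by simp
  next
    fix y
    assume y: "y \<in> {y. F y \<le> c}"
    have "grad F x \<bullet> y \<le> c - F x + grad F x \<bullet> x" for x
      using gradient_inequality[of x y] y by (simp add: inner_diff_right)
    then show "y \<in> (\<Inter>x. {y. grad F x \<bullet> y \<le> c - F x + grad F x \<bullet> x})"
      by blast
  qed
  show ?thesis
    unfolding supporting_halfspaces[symmetric] by (intro convex_INT convex_halfspace_le)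
qed

lemma midpoint_strict_sublevel:
  assumes "F y1 \<le> c" "F y2 \<le> c" "y1 \<noteq> y2"
  shows "F (midpoint y1 y2) < c"
proof -
  define z where "z = midpoint y1 y2"
  have "y1 \<noteq> z" "y2 \<noteq> z"
    using assms(3) by (simp_all add: z_def eq_commute[of _ "midpoint y1 y2"])
  then have "F z + grad F z \<bullet> (y1 - z) < F y1" "F z + grad F z \<bullet> (y2 - z) < F y2"
    by (simp_all add: gradient_inequality_strict)
  moreover have "(y1 - z) + (y2 - z) = (y1 + y2) - (z + z)"
    by (simp add: algebra_simps)
  then have "grad F z \<bullet> (y1 - z) + grad F z \<bullet> (y2 - z) = 0"
    by (simp add: z_def flip: inner_add_right)
  ultimately show ?thesis
    unfolding z_def[symmetric] using assms by linarith
qed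

end

locale convex_body_level = positive_hessian F for F :: "'a::euclidean_space \<Rightarrow> real" +
  fixes c :: real
  assumes below_at_0: "F 0 < c"
    and compact_level: "compact {x. F x = c}"
    and DIM_ge_2: "2 \<le> DIM('a)"
begin

abbreviation body :: "'a set" where
  "body \<equiv> {y. F y \<le> c}"

lemma closed_body: "closed body"
  by (intro closed_Collect_le continuous_on_F continuous_on_const)

lemma bounded_body: "bounded body"
proof -
  obtain B where "\<And>x. F x = c \<Longrightarrow> norm x \<le> B"
    using compact_imp_bounded[OF compact_level] unfolding bounded_iff by auto
  then have level: "{x. F x = c} \<subseteq> cball 0 B"
    by auto
  have "bdd_above (F ` cball 0 B)"
    by (intro bounded_imp_bdd_above compact_imp_bounded compact_continuous_image
        continuous_on_F compact_cball)
  then obtain b where b: "\<forall>y\<in>cball 0 B. F y \<le> b"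
    unfolding bdd_above_def by blast
  obtain q where q: "max b c < F q"
    using not_bdd_above_F by (meson bdd_aboveI2 not_le)
  have q_outside: "q \<in> - cball 0 B"
    using b q by force
  have "connected (F ` (- cball 0 B))"
    using connected_complement_bounded_convex[OF bounded_cball convex_cball DIM_ge_2]
    by (intro connected_continuous_image continuous_on_F)
  \<comment> \<open>on the connected set outside the ball \<open>F\<close> omits the value \<open>c\<close> and exceeds it at \<open>q\<close>\<close>
  then have "c < F y" if "y \<in> - cball 0 B" for y
    using connectedD_interval[of "F ` (- cball 0 B)" "F y" "F q" c] q q_outside that level
    by (force simp: not_less)
  then show ?thesis
    by (force intro: bounded_subset[OF bounded_cball, of _ 0 B])
qed

lemma compact_body: "compact body"
  using bounded_body closed_body by (simp add: compact_eq_bounded_closed)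

lemma cball_subset_body: "\<exists>r>0. cball 0 r \<subseteq> body"
proof -
  have "open {y. F y < c}"
    by (intro open_Collect_less continuous_on_F continuous_on_const)
  then obtain r where "r > 0" "cball 0 r \<subseteq> {y. F y < c}"
    using below_at_0 open_contains_cball by blast
  then show ?thesis
    by force
qed

lemma strict_sublevel_subset_interior: "{y. F y < c} \<subseteq> interior body"
  by (intro interior_maximal open_Collect_less continuous_on_F continuous_on_const) auto

lemma grad_inner_pos_on_level:
  assumes "F m = c"
  shows "0 < grad F m \<bullet> m"
  using gradient_inequality[of m 0] assms below_at_0 by simp

lemma support_point_unique:
  assumes "w \<noteq> 0" and "support_point body w z1" and "support_point body w z2"
  shows "z1 = z2"
proof (rule ccontr)
  assume "z1 \<noteq> z2"
  then have "midpoint z1 z2 \<in> interior body"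
    using assms(2,3) midpoint_strict_sublevel strict_sublevel_subset_interior
    unfolding support_point_def by blast
  moreover have "support_point body w (midpoint z1 z2)"
    using assms(2,3) midpoint_strict_sublevel[OF _ _ \<open>z1 \<noteq> z2\<close>]
    by (fastforce simp: support_point_def midpoint_def inner_add_right)
  ultimately show False
    using support_point_notin_interior[OF assms(1)] by blast
qed

lemma support_point_descent_direction:
  assumes support: "support_point body w m" and "F m = c" and descent: "grad F m \<bullet> v < 0"
  shows "w \<bullet> v \<le> 0"
proof -
  have "((\<lambda>t. F (m + t *\<^sub>R v)) has_real_derivative grad F m \<bullet> v) (at 0)"
    using has_real_derivative_along_line[OF differentiable_hdiff[of "[]"], where x=m and t=0 and u=v]
    by (simp add: frechet_derivative_eq_grad)
  from DERIV_neg_dec_right[OF this descent] obtain d where "d > 0"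
    and decreasing: "\<And>h. 0 < h \<Longrightarrow> h < d \<Longrightarrow> F (m + (0 + h) *\<^sub>R v) < F (m + 0 *\<^sub>R v)"
    by blast
  have "0 < d / 2" "d / 2 < d"
    using \<open>d > 0\<close> by simp_all
  then have "F (m + (d / 2) *\<^sub>R v) \<le> c"
    using decreasing \<open>F m = c\<close> by fastforce
  then have "w \<bullet> (m + (d / 2) *\<^sub>R v) \<le> w \<bullet> m"
    using support unfolding support_point_def by simp
  then show ?thesis
    using \<open>d > 0\<close> by (simp add: inner_add_right mult_le_0_iff)
qed

lemma support_point_iff_normal:
  assumes "w \<noteq> 0"
  shows "support_point body w m \<longleftrightarrow> F m = c \<and> (\<exists>s>0. w = s *\<^sub>R grad F m)"
proof
  assume support: "support_point body w m"
  have "F m \<le> c"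
    using support unfolding support_point_def by simp
  moreover have "\<not> F m < c"
    using support_point_notin_interior[OF assms support] strict_sublevel_subset_interior by blast
  ultimately have "F m = c"
    by linarith
  have "w \<bullet> v \<le> 0" if "grad F m \<bullet> v < 0" for v
    using support_point_descent_direction[OF support \<open>F m = c\<close> that] .
  moreover have "grad F m \<noteq> 0"
    using grad_inner_pos_on_level[OF \<open>F m = c\<close>] by auto
  ultimately obtain s where "s \<ge> 0" and w: "w = s *\<^sub>R grad F m"
    using halfspace_dual_imp_nonneg_multiple by blast
  moreover have "s \<noteq> 0"
    using assms w by auto
  ultimately show "F m = c \<and> (\<exists>s>0. w = s *\<^sub>R grad F m)"
    using \<open>F m = c\<close> by (intro conjI exI[of _ s]) auto
next
  assume "F m = c \<and> (\<exists>s>0. w = s *\<^sub>R grad F m)"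
  then obtain s where "F m = c" "s > 0" and w: "w = s *\<^sub>R grad F m"
    by blast
  have "w \<bullet> y \<le> w \<bullet> m" if "F y \<le> c" for y
  proof -
    have "grad F m \<bullet> (y - m) \<le> 0"
      using gradient_inequality[of m y] that \<open>F m = c\<close> by simp
    then have "s * (grad F m \<bullet> (y - m)) \<le> 0"
      using \<open>s > 0\<close> by (simp add: mult_nonneg_nonpos)
    then show ?thesis
      by (simp add: w inner_diff_right right_diff_distrib)
  qed
  then show "support_point body w m"
    using \<open>F m = c\<close> by (simp add: support_point_def)
qed

end

section \<open>Closed polygons reflecting through support points\<close>

lemma support_point_cball_bound:
  assumes "support_point S (cplxJ (x - m)) m" and "cball 0 r \<subseteq> S" and "0 \<le> r"
  shows "r * norm (x - m) \<le> cplxJ x \<bullet> m"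
proof -
  define y where "y = (r / norm (x - m)) *\<^sub>R cplxJ (x - m)"
  have "norm y \<le> r"
    using assms(3) by (cases "x = m") (simp_all add: y_def)
  then have "y \<in> S"
    using assms(2) by auto
  then have "cplxJ (x - m) \<bullet> y \<le> cplxJ (x - m) \<bullet> m"
    using assms(1) unfolding support_point_def by blast
  moreover have "cplxJ (x - m) \<bullet> y = r * norm (x - m)"
    by (simp add: y_def dot_square_norm power2_eq_square)
  moreover have "cplxJ (x - m) \<bullet> m = cplxJ x \<bullet> m"
    by (simp add: cplxJ_diff inner_diff_left)
  ultimately show ?thesis
    by simp
qed

definition alternating_sum :: "(nat \<Rightarrow> 'a::real_vector) \<Rightarrow> nat \<Rightarrow> 'a" where
  "alternating_sum ms j = (\<Sum>i<j. (-1) ^ i *\<^sub>R ms i)"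

lemma reflections_closed_form:
  fixes xs ms :: "nat \<Rightarrow> 'a::real_vector"
  assumes reflect: "\<And>j. j < k \<Longrightarrow> xs (Suc j) = 2 *\<^sub>R ms j - xs j" and "j \<le> k"
  shows "xs j = (-1) ^ j *\<^sub>R (xs 0 - 2 *\<^sub>R alternating_sum ms j)"
  using \<open>j \<le> k\<close>
proof (induction j)
  case 0
  then show ?case
    by (simp add: alternating_sum_def)
next
  case (Suc j)
  then show ?case
    by (simp add: reflect alternating_sum_def algebra_simps)
qed

lemma norm_alternating_sum_le:
  assumes "\<And>i. i < j \<Longrightarrow> norm (ms i) \<le> B"
  shows "norm (alternating_sum ms j) \<le> real j * B"
proof -
  have "norm (alternating_sum ms j) \<le> (\<Sum>i<j. B)"
    unfolding alternating_sum_def by (intro sum_norm_le) (simp add: assms)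
  then show ?thesis
    by simp
qed

lemma closed_reflections_alternating_sum:
  fixes xs ms :: "nat \<Rightarrow> 'a::real_vector"
  assumes reflect: "\<And>j. j < k \<Longrightarrow> xs (Suc j) = 2 *\<^sub>R ms j - xs j" and "xs k = xs 0"
  shows "alternating_sum ms k = 0 \<or> alternating_sum ms k = xs 0"
proof -
  define A where "A = alternating_sum ms k"
  have "xs k = (-1) ^ k *\<^sub>R (xs 0 - 2 *\<^sub>R A)"
    unfolding A_def by (rule reflections_closed_form[where xs = xs and ms = ms, OF reflect order_refl])
  then have closed_form: "xs 0 = (-1) ^ k *\<^sub>R (xs 0 - 2 *\<^sub>R A)"
    using \<open>xs k = xs 0\<close> by metis
  show ?thesis
  proof (cases "even k")
    case True
    then have "(-1::real) ^ k = 1"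
      by simp
    then have "A = 0"
      using closed_form by simp
    then show ?thesis
      by (simp add: A_def)
  next
    case False
    then have "(-1::real) ^ k = -1"
      by simp
    then have "A = xs 0"
      using closed_form by (simp add: algebra_simps flip: scaleR_2)
    then show ?thesis
      by (simp add: A_def)
  qed
qed

lemma inner_cplxJ_reflections:
  fixes xs ms :: "nat \<Rightarrow> 'd::finite R2d"
  assumes reflect: "\<And>j. j < k \<Longrightarrow> xs (Suc j) = 2 *\<^sub>R ms j - xs j" and "j \<le> k"
  shows "cplxJ (xs j) \<bullet> v
    = (-1) ^ j * (cplxJ (xs 0) \<bullet> v) - 2 * ((-1) ^ j * (cplxJ (alternating_sum ms j) \<bullet> v))"
proof -
  have "cplxJ (\<sigma> *\<^sub>R (xs 0 - 2 *\<^sub>R alternating_sum ms j)) \<bullet> v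
      = \<sigma> * (cplxJ (xs 0) \<bullet> v) - 2 * (\<sigma> * (cplxJ (alternating_sum ms j) \<bullet> v))" for \<sigma>
    by (simp add: cplxJ_diff inner_diff_left algebra_simps)
  moreover have "xs j = (-1) ^ j *\<^sub>R (xs 0 - 2 *\<^sub>R alternating_sum ms j)"
    by (rule reflections_closed_form[where xs = xs and ms = ms, OF reflect \<open>j \<le> k\<close>])
  ultimately show ?thesis
    by (simp only:)
qed

lemma closed_reflection_polygon_action_le:
  fixes xs ms :: "nat \<Rightarrow> 'd::finite R2d"
  assumes reflect: "\<And>j. j < k \<Longrightarrow> xs (Suc j) = 2 *\<^sub>R ms j - xs j"
    and bounded: "\<And>j. j < k \<Longrightarrow> norm (ms j) \<le> B"
    and closed: "xs k = xs 0"
  shows "(\<Sum>j<k. cplxJ (xs j) \<bullet> ms j) \<le> 2 * real k ^ 2 * B ^ 2"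
proof (cases "k = 0")
  case False
  define A where "A = alternating_sum ms"
  have "0 \<le> B"
    using bounded[of 0] False norm_ge_zero order_trans by blast
  \<comment> \<open>the sum splits into \<open>\<omega>(x\<^sub>0, A\<^sub>k) = 0\<close> and terms \<open>\<omega>(A\<^sub>j, m\<^sub>j)\<close> bounded by \<open>kB\<^sup>2\<close>\<close>
  have vertex: "cplxJ (xs j) \<bullet> ms j \<le> (-1) ^ j * (cplxJ (xs 0) \<bullet> ms j) + 2 * real k * B ^ 2"
    if "j < k" for j
  proof -
    have "\<bar>cplxJ (A j) \<bullet> ms j\<bar> \<le> norm (A j) * norm (ms j)"
      using Cauchy_Schwarz_ineq2[of "cplxJ (A j)" "ms j"] by simp
    also have "\<dots> \<le> (real j * B) * B"
      unfolding A_def using that \<open>0 \<le> B\<close>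
      by (intro mult_mono norm_alternating_sum_le bounded) auto
    also have "\<dots> \<le> real k * B * B"
      using that \<open>0 \<le> B\<close> by (intro mult_right_mono) auto
    finally have "\<bar>(-1) ^ j * (cplxJ (A j) \<bullet> ms j)\<bar> \<le> real k * B * B"
      by (simp add: abs_mult)
    then show ?thesis
      using inner_cplxJ_reflections[where xs = xs and ms = ms, OF reflect less_imp_le[OF that], of "ms j"]
      unfolding A_def power2_eq_square abs_le_iff by linarith
  qed
  have "cplxJ (xs 0) \<bullet> A k = 0"
    using closed_reflections_alternating_sum[OF reflect closed] by (auto simp: A_def)
  have "(\<Sum>j<k. cplxJ (xs j) \<bullet> ms j) \<le> (\<Sum>j<k. (-1) ^ j * (cplxJ (xs 0) \<bullet> ms j) + 2 * real k * B ^ 2)"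
    by (intro sum_mono vertex) simp
  also have "\<dots> = cplxJ (xs 0) \<bullet> A k + 2 * real k ^ 2 * B ^ 2"
    by (simp add: A_def alternating_sum_def sum.distrib inner_sum_right power2_eq_square)
  finally show ?thesis
    using \<open>cplxJ (xs 0) \<bullet> A k = 0\<close> by simp
qed simp

lemma closed_reflection_polygon_bound:
  fixes xs ms :: "nat \<Rightarrow> 'd::finite R2d"
  assumes "0 < r" and "cball 0 r \<subseteq> S" and "S \<subseteq> cball 0 B"
    and reflect: "\<And>j. j < k \<Longrightarrow> xs (Suc j) = 2 *\<^sub>R ms j - xs j"
    and support: "\<And>j. j < k \<Longrightarrow> support_point S (cplxJ (xs j - ms j)) (ms j)"
    and closed: "xs k = xs 0" and "0 < k"
  shows "norm (xs 0) \<le> B + 2 * real k ^ 2 * B ^ 2 / r"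
proof -
  have bounded: "norm (ms j) \<le> B" if "j < k" for j
    using support[OF that] assms(3) unfolding support_point_def by auto
  have "r * (norm (xs 0) - B) \<le> r * norm (xs 0 - ms 0)"
    using bounded[OF \<open>0 < k\<close>] norm_triangle_ineq2[of "xs 0" "ms 0"] \<open>0 < r\<close>
    by (intro mult_left_mono) auto
  also have "\<dots> \<le> (\<Sum>j<k. r * norm (xs j - ms j))"
    using \<open>0 < k\<close> \<open>0 < r\<close> by (intro member_le_sum) auto
  also have "\<dots> \<le> (\<Sum>j<k. cplxJ (xs j) \<bullet> ms j)"
    using support assms(2) \<open>0 < r\<close> by (intro sum_mono support_point_cball_bound) auto
  also have "\<dots> \<le> 2 * real k ^ 2 * B ^ 2"
    using reflect bounded closed by (rule closed_reflection_polygon_action_le)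
  finally have "norm (xs 0) - B \<le> 2 * real k ^ 2 * B ^ 2 / r"
    using \<open>0 < r\<close> by (simp add: pos_le_divide_eq mult.commute)
  then show ?thesis
    by simp
qed

section \<open>The outer billiard map\<close>

locale outer_billiard_table = convex_body_level F c for F :: "'d::finite R2d \<Rightarrow> real" and c :: real
begin

lemma reeb_on_level:
  assumes "F m = c"
  shows "reeb F m = (1 / (grad F m \<bullet> m)) *\<^sub>R cplxJ (grad F m)"
proof -
  define G where "G = grad F m"
  have "0 < G \<bullet> m"
    using grad_inner_pos_on_level[OF assms] by (simp add: G_def)
  have tangent: "tangent_space F m = {v. G \<bullet> v = 0}"
    by (simp add: tangent_space_def G_def frechet_derivative_eq_grad)
  have "r = (1 / (G \<bullet> m)) *\<^sub>R cplxJ G"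
    if r: "(\<forall>v\<in>tangent_space F m. symp v r = 0) \<and> symp m r = 1" for r
  proof -
    define \<beta> where "\<beta> = (cplxJ r \<bullet> G) / (G \<bullet> G)"
    have "cplxJ r \<bullet> v = 0" if "G \<bullet> v = 0" for v
    proof -
      have "cplxJ v \<bullet> r = 0"
        using r that unfolding tangent symp_def by blast
      then show ?thesis
        using inner_cplxJ_left[of v r] by (simp add: inner_commute)
    qed
    then have Jr: "cplxJ r = \<beta> *\<^sub>R G"
      unfolding \<beta>_def by (rule orthogonal_complement_imp_multiple)
    have "1 = - (m \<bullet> cplxJ r)"
      using r inner_cplxJ_left[of m r] by (simp add: symp_def)
    then have "\<beta> = - 1 / (G \<bullet> m)"
      using \<open>0 < G \<bullet> m\<close> by (simp add: Jr inner_commute field_simps)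
    then have "cplxJ (cplxJ r) = - ((1 / (G \<bullet> m)) *\<^sub>R cplxJ G)"
      by (simp add: Jr)
    then show ?thesis
      by simp
  qed
  moreover have "(\<forall>v\<in>tangent_space F m. symp v ((1 / (G \<bullet> m)) *\<^sub>R cplxJ G) = 0)
      \<and> symp m ((1 / (G \<bullet> m)) *\<^sub>R cplxJ G) = 1"
    using \<open>0 < G \<bullet> m\<close> by (simp add: tangent symp_def inner_commute)
  ultimately show ?thesis
    unfolding reeb_def G_def[symmetric] by (intro the_equality) blast+
qed

lemma reeb_direction_iff_normal:
  assumes "F m = c"
  shows "(\<exists>t>0. m - x = t *\<^sub>R reeb F m) \<longleftrightarrow> (\<exists>s>0. cplxJ (x - m) = s *\<^sub>R grad F m)"
proof -
  define a where "a = grad F m \<bullet> m"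
  have "0 < a"
    using grad_inner_pos_on_level[OF assms] by (simp add: a_def)
  have iff: "m - x = t *\<^sub>R reeb F m \<longleftrightarrow> cplxJ (x - m) = (t / a) *\<^sub>R grad F m" for t
  proof -
    have "cplxJ (t *\<^sub>R reeb F m) = - ((t / a) *\<^sub>R grad F m)"
      by (simp add: reeb_on_level[OF assms] a_def)
    moreover have "cplxJ (m - x) = - cplxJ (x - m)"
      by (metis cplxJ_minus minus_diff_eq)
    ultimately show ?thesis
      by (metis cplxJ_eq_iff neg_equal_iff_equal)
  qed
  show ?thesis
  proof
    assume "\<exists>t>0. m - x = t *\<^sub>R reeb F m"
    then show "\<exists>s>0. cplxJ (x - m) = s *\<^sub>R grad F m"
      using iff \<open>0 < a\<close> by (meson divide_pos_pos)
  next
    assume "\<exists>s>0. cplxJ (x - m) = s *\<^sub>R grad F m"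
    then obtain s where "s > 0" "cplxJ (x - m) = s *\<^sub>R grad F m"
      by blast
    then show "\<exists>t>0. m - x = t *\<^sub>R reeb F m"
      using iff[of "s * a"] \<open>0 < a\<close> by (intro exI[of _ "s * a"]) simp
  qed
qed

lemma tangent_point_unique:
  assumes "c < F x"
    and m1: "support_point body (cplxJ (x - m1)) m1" and m2: "support_point body (cplxJ (x - m2)) m2"
  shows "m1 = m2"
proof -
  have "cplxJ (x - m1) \<bullet> m2 \<le> cplxJ (x - m1) \<bullet> m1" "cplxJ (x - m2) \<bullet> m1 \<le> cplxJ (x - m2) \<bullet> m2"
    using m1 m2 unfolding support_point_def by blast+
  \<comment> \<open>the two slacks sum to \<open>\<omega>(m\<^sub>2, m\<^sub>1) + \<omega>(m\<^sub>1, m\<^sub>2) = 0\<close>\<close>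
  moreover have "(cplxJ (x - m1) \<bullet> m2 - cplxJ (x - m1) \<bullet> m1)
      + (cplxJ (x - m2) \<bullet> m1 - cplxJ (x - m2) \<bullet> m2) = 0"
    using inner_cplxJ_left[of m2 m1] inner_commute[of m2 "cplxJ m1"]
    by (simp add: cplxJ_diff inner_diff_left)
  ultimately have "cplxJ (x - m1) \<bullet> m2 = cplxJ (x - m1) \<bullet> m1"
    by linarith
  then have "support_point body (cplxJ (x - m1)) m2"
    using m1 m2 unfolding support_point_def by (metis (no_types, lifting))
  moreover have "cplxJ (x - m1) \<noteq> 0"
    using m1 \<open>c < F x\<close> unfolding support_point_def by auto
  ultimately show ?thesis
    using support_point_unique m1 by blast
qed

lemma tangent_point_exists:
  assumes "c < F x"
  shows "\<exists>m. support_point body (cplxJ (x - m)) m"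
proof -
  have "0 \<in> body"
    using below_at_0 by simp
  then have "body \<noteq> {}"
    by blast
  have unique: "\<exists>!z. support_point body (cplxJ (x - y)) z" if "y \<in> body" for y
  proof -
    have "cplxJ (x - y) \<noteq> 0"
      using that \<open>c < F x\<close> by auto
    then show ?thesis
      using support_point_exists[OF compact_body \<open>body \<noteq> {}\<close>] support_point_unique by blast
  qed
  define h where "h y = (THE z. support_point body (cplxJ (x - y)) z)" for y
  have h: "support_point body (cplxJ (x - y)) (h y)" if "y \<in> body" for y
    using theI'[OF unique[OF that]] by (simp add: h_def)
  have "continuous_on UNIV (\<lambda>y. cplxJ (x - y))"
    by (rule continuous_on_compose2[OF continuous_on_cplxJ]) (auto intro: continuous_intros)
  then have "continuous_on body h"
    unfolding h_def by (rule continuous_on_unique_support_point[OF compact_body _ unique])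
  moreover have "h \<in> body \<rightarrow> body"
    using h unfolding support_point_def by blast
  ultimately obtain m where "m \<in> body" "h m = m"
    using brouwer[OF compact_body convex_sublevel \<open>body \<noteq> {}\<close>] by blast
  then show ?thesis
    using h by metis
qed

lemma m_minus_is_tangent_point:
  assumes "c < F x"
  shows "support_point body (cplxJ (x - m_minus F {y. F y = c} x)) (m_minus F {y. F y = c} x)"
proof -
  have "m \<in> {y. F y = c} \<and> (\<exists>t>0. m - x = t *\<^sub>R reeb F m) \<longleftrightarrow> support_point body (cplxJ (x - m)) m"
    for m
  proof (cases "F m = c")
    case True
    then have "cplxJ (x - m) \<noteq> 0"
      using \<open>c < F x\<close> by auto
    then show ?thesis
      using True by (simp add: reeb_direction_iff_normal support_point_iff_normal)
  next
    case False
    have "\<not> support_point body (cplxJ (x - m)) m"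
    proof
      assume support: "support_point body (cplxJ (x - m)) m"
      then have "cplxJ (x - m) \<noteq> 0"
        using \<open>c < F x\<close> unfolding support_point_def by auto
      then show False
        using support False support_point_iff_normal by blast
    qed
    then show ?thesis
      using False by simp
  qed
  then have "m_minus F {y. F y = c} x = (THE m. support_point body (cplxJ (x - m)) m)"
    unfolding m_minus_def by simp
  moreover have "\<exists>!m. support_point body (cplxJ (x - m)) m"
    using tangent_point_exists[OF assms] tangent_point_unique[OF assms] by blast
  ultimately show ?thesis
    using theI' by simp
qed

lemma billiard_step:
  assumes "c < F x"
  defines "m \<equiv> m_minus F {y. F y = c} x"
  shows "outer_billiard F {y. F y = c} x = 2 *\<^sub>R m - x"
    and "c < F (outer_billiard F {y. F y = c} x)"
proof -
  show reflection: "outer_billiard F {y. F y = c} x = 2 *\<^sub>R m - x"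
    by (simp add: outer_billiard_def m_def)
  have support: "support_point body (cplxJ (x - m)) m"
    unfolding m_def by (rule m_minus_is_tangent_point[OF assms(1)])
  then have "x \<noteq> m"
    using \<open>c < F x\<close> unfolding support_point_def by auto
  \<comment> \<open>the reflected point lies on the same supporting hyperplane as \<open>m\<close>, so by uniqueness it cannot be in the body\<close>
  have "\<not> F (2 *\<^sub>R m - x) \<le> c"
  proof
    assume "F (2 *\<^sub>R m - x) \<le> c"
    moreover have "cplxJ (x - m) \<bullet> (2 *\<^sub>R m - x) = cplxJ (x - m) \<bullet> m"
      using inner_cplxJ_self[of "x - m"] by (simp add: scaleR_2 algebra_simps inner_diff_right inner_add_right)
    ultimately have "support_point body (cplxJ (x - m)) (2 *\<^sub>R m - x)"
      using support unfolding support_point_def by simp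
    moreover have "cplxJ (x - m) \<noteq> 0"
      using \<open>x \<noteq> m\<close> by simp
    ultimately have "2 *\<^sub>R m - x = m"
      using support_point_unique support by blast
    then show False
      using \<open>x \<noteq> m\<close> by (simp add: scaleR_2 algebra_simps)
  qed
  then show "c < F (outer_billiard F {y. F y = c} x)"
    by (simp add: reflection)
qed

lemma iterate_outside:
  assumes "c < F z"
  shows "c < F ((outer_billiard F {y. F y = c} ^^ j) z)"
  by (induction j) (simp_all add: assms billiard_step(2))

lemma periodic_orbit_bound:
  assumes "0 < r" and "cball 0 r \<subseteq> body" and "body \<subseteq> cball 0 B"
    and "c < F z" and periodic: "(outer_billiard F {y. F y = c} ^^ k) z = z" and "0 < k"
  shows "norm z \<le> B + 2 * real k ^ 2 * B ^ 2 / r"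
proof -
  define xs where "xs j = (outer_billiard F {y. F y = c} ^^ j) z" for j
  have outside: "c < F (xs j)" for j
    using iterate_outside[OF \<open>c < F z\<close>] by (simp add: xs_def)
  have "norm (xs 0) \<le> B + 2 * real k ^ 2 * B ^ 2 / r"
  proof (rule closed_reflection_polygon_bound[where ms = "\<lambda>j. m_minus F {y. F y = c} (xs j)",
        OF assms(1-3)])
    show "xs (Suc j) = 2 *\<^sub>R m_minus F {y. F y = c} (xs j) - xs j" for j
      using billiard_step(1)[OF outside[of j]] by (simp add: xs_def)
    show "support_point body (cplxJ (xs j - m_minus F {y. F y = c} (xs j))) (m_minus F {y. F y = c} (xs j))"
      for j
      using m_minus_is_tangent_point[OF outside[of j]] .
    show "xs k = xs 0"
      using periodic by (simp add: xs_def)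
  qed fact
  then show ?thesis
    by (simp add: xs_def)
qed

end

theorem theorem3p8:
  fixes F :: "'d::finite R2d \<Rightarrow> real" and c :: real and M :: "'d R2d set" and k :: nat
  assumes "smooth_fun F"
    and "hessian_pos_def F"
    and "M = {x. F x = c}"
    and "compact M"
    and "F 0 < c"
    and "k \<ge> 1"
  shows "\<exists>\<rho>>0. \<forall>z. F z > c \<and> (outer_billiard F M ^^ k) z = z \<longrightarrow> norm z \<le> \<rho>"
proof -
  interpret outer_billiard_table F c
    using assms DIM_R2d by unfold_locales auto
  obtain r where "0 < r" and "cball 0 r \<subseteq> body"
    using cball_subset_body by blast
  obtain B where "0 < B" and "body \<subseteq> cball 0 B"
    using bounded_body by (auto simp: bounded_pos subset_iff)
  have "0 < B + 2 * real k ^ 2 * B ^ 2 / r"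
    using \<open>0 < B\<close> \<open>0 < r\<close> by (simp add: add_pos_nonneg)
  moreover have "norm z \<le> B + 2 * real k ^ 2 * B ^ 2 / r"
    if "c < F z \<and> (outer_billiard F M ^^ k) z = z" for z
    using periodic_orbit_bound[OF \<open>0 < r\<close> \<open>cball 0 r \<subseteq> body\<close> \<open>body \<subseteq> cball 0 B\<close>] that assms(3,6)
    by simp
  ultimately show ?thesis
    by blast
qed

end
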